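(* Let $f$ be a multiplicative function from the positive integers to the nonnegative integers with $f(p^{k-1})\le f(p^k)$ for all primes $p$ and all integers $k\ge 1$. Then every $f$-practical number is weakly $f$-practical.
   Context: $f$ multiplicative means $f(1)=1$ and $f(ab)=f(a)f(b)$ for coprime $a,b$. $S_f(n)=\sum_{d\mid n} f(d)$. A positive integer $n$ is $f$-practical if every positive integer $m\le S_f(n)$ equals $\sum_{d\in\mathcal{D}}f(d)$ for some set $\mathcal{D}$ of distinct divisors of $n$. Write $n=p_1^{e_1}\cdots p_k^{e_k}$ with distinct primes ordered so that $f(p_1)\le f(p_2)\le\cdots\le f(p_k)$, and let $m_i=\prod_{j=1}^{i}p_j^{e_j}$ for $0\le i<k$ (so $m_0=1$). Then $n$ is called weakly $f$-practical if $f(p_{i+1})\le S_f(m_i)+1$ for every $0\le i<k$. *)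

theory Defs
  imports "HOL-Computational_Algebra.Primes"
begin

definition multiplicative :: "(nat \<Rightarrow> nat) \<Rightarrow> bool" where
  "multiplicative f \<longleftrightarrow> f 1 = 1 \<and>
     (\<forall>a b. a > 0 \<longrightarrow> b > 0 \<longrightarrow> coprime a b \<longrightarrow> f (a * b) = f a * f b)"

definition S_f :: "(nat \<Rightarrow> nat) \<Rightarrow> nat \<Rightarrow> nat" where
  "S_f f n = (\<Sum>d\<in>{d. d dvd n}. f d)"

definition f_practical :: "(nat \<Rightarrow> nat) \<Rightarrow> nat \<Rightarrow> bool" where
  "f_practical f n \<longleftrightarrow> n > 0 \<and>
     (\<forall>m. 1 \<le> m \<and> m \<le> S_f f n \<longrightarrow>
        (\<exists>D. D \<subseteq> {d. d dvd n} \<and> m = (\<Sum>d\<in>D. f d)))"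

text \<open>Weakly f-practical: for an ordering ps of the distinct prime factors of n
  with f(p_1) \<le> ... \<le> f(p_k), and m_i the product of the first i prime powers,
  f(p_{i+1}) \<le> S_f(m_i) + 1. (Required for every such ordering; it is
  independent of the tie-breaking.)\<close>
definition weakly_f_practical :: "(nat \<Rightarrow> nat) \<Rightarrow> nat \<Rightarrow> bool" where
  "weakly_f_practical f n \<longleftrightarrow> n > 0 \<and>
     (\<forall>ps. distinct ps \<and> set ps = prime_factors n \<and> sorted (map f ps) \<longrightarrow>
        (\<forall>i < length ps.
           f (ps ! i) \<le> S_f f (\<Prod>j<i. (ps ! j) ^ multiplicity (ps ! j) n) + 1))"

end

theory Submission
  imports Defs
begin

text \<open>Let \<open>q\<close> minimise \<open>f\<close> among the prime factors of \<open>n\<close> outside \<open>P\<close>, and let \<open>M\<close> be the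
  \<open>P\<close>-part of \<open>n\<close>. If \<open>f q > S_f M + 1\<close>, then \<open>m = S_f M + 1\<close> is at most \<open>S_f M + f q \<le> S_f n\<close>,
  so \<open>m\<close> is a sum of \<open>f\<close> over distinct divisors of \<open>n\<close>. A divisor not dividing \<open>M\<close> has a prime
  factor \<open>r \<notin> P\<close>, and monotonicity on prime powers gives \<open>f d \<ge> f r \<ge> f q > m\<close>; so all the
  divisors used divide \<open>M\<close>, and their sum is at most \<open>S_f M < m\<close>.\<close>

lemma multiplicative_mult:
  assumes "multiplicative f" "a > 0" "b > 0" "coprime a b"
  shows "f (a * b) = f a * f b"
  using assms unfolding multiplicative_def by blast

lemma prime_power_mono:
  fixes f :: "nat \<Rightarrow> nat"
  assumes mono: "\<And>p k. prime p \<Longrightarrow> k \<ge> 1 \<Longrightarrow> f (p ^ (k - 1)) \<le> f (p ^ k)"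
    and "prime p" "a \<le> b"
  shows "f (p ^ a) \<le> f (p ^ b)"
  using \<open>a \<le> b\<close>
proof (induction b)
  case (Suc b)
  have "f (p ^ b) \<le> f (p ^ Suc b)" using mono[OF \<open>prime p\<close>, of "Suc b"] by simp
  with Suc show ?case by (cases "a = Suc b") auto
qed simp

lemma prime_power_cofactor:
  fixes d p :: nat
  assumes "d > 0" "prime p" "p dvd d"
  obtains k r where "k \<ge> 1" "d = p ^ k * r" "r > 0" "coprime (p ^ k) r" "r < d"
proof -
  obtain r where r: "d = p ^ multiplicity p d * r" "\<not> p dvd r"
    using multiplicity_decompose'[of d p] assms(1,2) not_prime_unit by blast
  define k where "k = multiplicity p d"
  have "k \<ge> 1"
    using assms prime_multiplicity_gt_zero_iff[of p d] unfolding k_def by simp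
  moreover have "r > 0" using r(2) by (cases r) auto
  moreover have "coprime (p ^ k) r"
    using prime_imp_coprime[OF assms(2) r(2)] by simp
  moreover have "r < d"
  proof -
    have "1 < p ^ k"
      using one_less_power[OF prime_gt_1_nat[OF assms(2)]] \<open>k \<ge> 1\<close> by simp
    with \<open>r > 0\<close> show ?thesis using r(1) unfolding k_def[symmetric] by simp
  qed
  ultimately show ?thesis using that r(1) unfolding k_def by blast
qed

lemma multiplicative_pos:
  fixes f :: "nat \<Rightarrow> nat"
  assumes mult: "multiplicative f"
    and mono: "\<And>p k. prime p \<Longrightarrow> k \<ge> 1 \<Longrightarrow> f (p ^ (k - 1)) \<le> f (p ^ k)"
    and "d > 0"
  shows "f d > 0"
  using \<open>d > 0\<close>
proof (induction d rule: less_induct)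
  case (less d)
  show ?case
  proof (cases "d = 1")
    case True
    then show ?thesis using mult by (simp add: multiplicative_def)
  next
    case False
    then obtain p where p: "prime p" "p dvd d" using prime_factor_nat by blast
    obtain k r where kr: "k \<ge> 1" "d = p ^ k * r" "r > 0" "coprime (p ^ k) r" "r < d"
      using prime_power_cofactor[OF less.prems p] .
    have "f (p ^ 0) \<le> f (p ^ k)" by (rule prime_power_mono[OF mono p(1) le0])
    then have "f (p ^ k) > 0" using mult by (simp add: multiplicative_def)
    moreover have "f r > 0" using less.IH kr by blast
    moreover have "f d = f (p ^ k) * f r"
      using multiplicative_mult[OF mult] kr p(1) by (simp add: prime_gt_0_nat)
    ultimately show ?thesis by simp
  qed
qed

lemma multiplicative_prime_le_dvd:
  fixes f :: "nat \<Rightarrow> nat"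
  assumes mult: "multiplicative f"
    and mono: "\<And>p k. prime p \<Longrightarrow> k \<ge> 1 \<Longrightarrow> f (p ^ (k - 1)) \<le> f (p ^ k)"
    and "d > 0" "prime p" "p dvd d"
  shows "f p \<le> f d"
proof -
  obtain k r where kr: "k \<ge> 1" "d = p ^ k * r" "r > 0" "coprime (p ^ k) r"
    using prime_power_cofactor[OF assms(3-5)] by blast
  have "f (p ^ 1) \<le> f (p ^ k)" by (rule prime_power_mono[OF mono \<open>prime p\<close> kr(1)])
  then have "f p \<le> f (p ^ k)" by simp
  also have "\<dots> \<le> f (p ^ k) * f r" using multiplicative_pos[OF mult mono kr(3)] by simp
  also have "\<dots> = f d"
    using multiplicative_mult[OF mult] kr \<open>prime p\<close> by (simp add: prime_gt_0_nat)
  finally show ?thesis .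
qed

lemma multiplicity_prod_prime_power_part:
  fixes n :: nat
  assumes "P \<subseteq> prime_factors n" "prime q"
  shows "multiplicity q (\<Prod>p\<in>P. p ^ multiplicity p n) = (if q \<in> P then multiplicity q n else 0)"
proof -
  have "finite P" using assms(1) finite_subset by blast
  moreover have "\<And>p. p \<in> P \<Longrightarrow> prime p" using assms(1) by auto
  ultimately show ?thesis
    using multiplicity_prod_prime_powers[of P q "\<lambda>p. multiplicity p n"] assms(2) by simp
qed

lemma prime_power_part_pos:
  fixes n :: nat
  assumes "P \<subseteq> prime_factors n"
  shows "(\<Prod>p\<in>P. p ^ multiplicity p n) > 0"
  using assms by (intro prod_pos) (auto intro: prime_gt_0_nat)

lemma prime_power_part_dvd:
  fixes n :: nat
  assumes "n > 0" "P \<subseteq> prime_factors n"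
  shows "(\<Prod>p\<in>P. p ^ multiplicity p n) dvd n"
  using assms prime_power_part_pos[OF assms(2)]
  by (intro multiplicity_le_imp_dvd) (auto simp: multiplicity_prod_prime_power_part)

lemma prime_dvd_prime_power_part_iff:
  fixes n :: nat
  assumes "P \<subseteq> prime_factors n" "prime q"
  shows "q dvd (\<Prod>p\<in>P. p ^ multiplicity p n) \<longleftrightarrow> q \<in> P"
proof -
  let ?M = "\<Prod>p\<in>P. p ^ multiplicity p n"
  have "q dvd ?M \<longleftrightarrow> multiplicity q ?M > 0"
    using prime_multiplicity_gt_zero_iff[of q ?M] prime_power_part_pos[OF assms(1)] assms(2)
    by simp
  also have "\<dots> \<longleftrightarrow> q \<in> P"
    using multiplicity_prod_prime_power_part[OF assms] assms(1)
    by (auto simp: prime_factors_multiplicity)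
  finally show ?thesis .
qed

lemma dvd_not_dvd_prime_power_part:
  fixes n d :: nat
  assumes "n > 0" "d dvd n" "P \<subseteq> prime_factors n"
    and "\<not> d dvd (\<Prod>p\<in>P. p ^ multiplicity p n)"
  obtains r where "r \<in> prime_factors n" "r \<notin> P" "r dvd d"
proof -
  let ?M = "\<Prod>p\<in>P. p ^ multiplicity p n"
  have "d > 0" using assms(1,2) by (simp add: dvd_pos_nat)
  then have "\<not> (\<forall>r. prime r \<longrightarrow> multiplicity r d \<le> multiplicity r ?M)"
    using multiplicity_le_imp_dvd[of d ?M] assms(4) by auto
  then obtain r where r: "prime r" "multiplicity r ?M < multiplicity r d"
    by (auto simp: not_le)
  then have "r dvd d"
    using prime_multiplicity_gt_zero_iff[of r d] \<open>d > 0\<close> by simp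
  moreover have "multiplicity r d \<le> multiplicity r n"
    using dvd_imp_multiplicity_le[OF assms(2)] assms(1) by simp
  then have "r \<notin> P" using r multiplicity_prod_prime_power_part[OF assms(3) r(1)] by auto
  moreover have "r \<in> prime_factors n"
    using r(1) \<open>r dvd d\<close> assms(1,2) dvd_trans by (auto simp: in_prime_factors_iff)
  ultimately show ?thesis using that by blast
qed

lemma S_f_add_le:
  assumes "n > 0" "M dvd n" "q dvd n" "\<not> q dvd M"
  shows "S_f f M + f q \<le> S_f f n"
proof -
  have "M > 0" using assms(1,2) by (simp add: dvd_pos_nat)
  then have "S_f f M + f q = sum f ({d. d dvd M} \<union> {q})"
    using assms(4) by (simp add: S_f_def)
  also have "\<dots> \<le> S_f f n"
    unfolding S_f_def using assms dvd_trans by (intro sum_mono2) auto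
  finally show ?thesis .
qed

lemma f_practical_prime_power_part_bound:
  fixes f :: "nat \<Rightarrow> nat"
  assumes mult: "multiplicative f"
    and mono: "\<And>p k. prime p \<Longrightarrow> k \<ge> 1 \<Longrightarrow> f (p ^ (k - 1)) \<le> f (p ^ k)"
    and practical: "f_practical f n"
    and P: "P \<subseteq> prime_factors n"
    and q: "q \<in> prime_factors n" "q \<notin> P"
    and q_min: "\<And>r. r \<in> prime_factors n \<Longrightarrow> r \<notin> P \<Longrightarrow> f q \<le> f r"
  shows "f q \<le> S_f f (\<Prod>p\<in>P. p ^ multiplicity p n) + 1"
proof (rule ccontr)
  let ?M = "\<Prod>p\<in>P. p ^ multiplicity p n"
  define m where "m = S_f f ?M + 1"
  assume "\<not> ?thesis"
  then have big: "m < f q" unfolding m_def by simp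
  have "n > 0" using practical by (simp add: f_practical_def)
  have "\<not> q dvd ?M" using prime_dvd_prime_power_part_iff[OF P] q by auto
  then have "S_f f ?M + f q \<le> S_f f n"
    using S_f_add_le prime_power_part_dvd[OF \<open>n > 0\<close> P] q(1) \<open>n > 0\<close> by auto
  then have "m \<le> S_f f n" using big unfolding m_def by simp
  then obtain D where D: "D \<subseteq> {d. d dvd n}" "m = sum f D"
    using practical unfolding f_practical_def m_def by auto
  have "finite D" using D(1) \<open>n > 0\<close> finite_subset by fastforce
  have "d dvd ?M" if "d \<in> D" for d
  proof (rule ccontr)
    assume "\<not> d dvd ?M"
    moreover have "d dvd n" using that D(1) by auto
    ultimately obtain r where r: "r \<in> prime_factors n" "r \<notin> P" "r dvd d"
      using dvd_not_dvd_prime_power_part \<open>n > 0\<close> P by metis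
    have "f q \<le> f r" using q_min r by blast
    also have "\<dots> \<le> f d"
      using multiplicative_prime_le_dvd[OF mult mono] r \<open>d dvd n\<close> \<open>n > 0\<close> dvd_pos_nat
      by blast
    also have "\<dots> \<le> sum f D" using that \<open>finite D\<close> by (intro member_le_sum) auto
    also have "\<dots> = m" using D(2) by simp
    finally show False using big by simp
  qed
  then have "sum f D \<le> S_f f ?M"
    unfolding S_f_def using prime_power_part_pos[OF P] by (intro sum_mono2) auto
  then show False using D(2) unfolding m_def by simp
qed

theorem theorem2p2:
  fixes f :: "nat \<Rightarrow> nat"
  assumes "multiplicative f"
    and "\<And>p k. prime p \<Longrightarrow> k \<ge> 1 \<Longrightarrow> f (p ^ (k - 1)) \<le> f (p ^ k)"
    and "f_practical f n"
  shows "weakly_f_practical f n"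
  unfolding weakly_f_practical_def
proof (intro conjI allI impI)
  show "n > 0" using assms(3) by (simp add: f_practical_def)
  fix ps i
  assume "distinct ps \<and> set ps = prime_factors n \<and> sorted (map f ps)"
  then have distinct: "distinct ps" and set_ps: "set ps = prime_factors n"
    and sorted: "sorted (map f ps)" by blast+
  assume i: "i < length ps"
  define P where "P = (!) ps ` {..<i}"
  have "inj_on ((!) ps) {..<i}" using distinct i by (simp add: inj_on_def nth_eq_iff_index_eq)
  then have "(\<Prod>j<i. ps ! j ^ multiplicity (ps ! j) n) = (\<Prod>p\<in>P. p ^ multiplicity p n)"
    unfolding P_def by (simp add: prod.reindex)
  moreover have "f (ps ! i) \<le> S_f f (\<Prod>p\<in>P. p ^ multiplicity p n) + 1"
  proof (rule f_practical_prime_power_part_bound[OF assms])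
    have "P \<subseteq> set ps" unfolding P_def using i by auto
    then show "P \<subseteq> prime_factors n" using set_ps by simp
    show "ps ! i \<in> prime_factors n" using i set_ps nth_mem by blast
    show "ps ! i \<notin> P" using distinct i unfolding P_def by (auto simp: nth_eq_iff_index_eq)
    fix r assume r: "r \<in> prime_factors n" "r \<notin> P"
    then have "r \<in> set ps" using set_ps by simp
    then obtain j where j: "j < length ps" "r = ps ! j" by (auto simp: in_set_conv_nth)
    have "i \<le> j"
    proof (rule ccontr)
      assume "\<not> i \<le> j"
      then have "r \<in> P" unfolding P_def using j(2) by simp
      then show False using r(2) by contradiction
    qed
    then show "f (ps ! i) \<le> f r" using sorted_nth_mono[OF sorted] j by simp
  qed
  ultimately show "f (ps ! i) \<le> S_f f (\<Prod>j<i. ps ! j ^ multiplicity (ps ! j) n) + 1"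
    by simp
qed
end
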